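(* Let $\mathcal D$ be universal, $\mathrm M=(M,d)\in\mathfrak U_{\mathcal D}$, $\mathfrak t$ a Katětov function of $\mathrm M$ with nonempty domain and $\operatorname{rank}(\mathfrak t)=r$, let $s\in\mathcal D$ with $0<s\le 2r$, and let $x\in\operatorname{orb}(\mathfrak t)$. Then the function $\mathfrak p$ with $\operatorname{dom}(\mathfrak p)=\operatorname{dom}(\mathfrak t)\cup\{x\}$, $\mathfrak t\subseteq\mathfrak p$ and $\mathfrak p(x)=s$ is a Katětov function of $\mathrm M$.
   Context: $\mathcal D$ is a finite subset of $\mathbb R_{\ge0}$ containing $0$. $\mathfrak U_{\mathcal D}$ is the class of countable homogeneous metric spaces (every isometry between finite subspaces extends to an isometry of the space onto itself) with distance set exactly $\mathcal D$ into which every finite metric space with distances in $\mathcal D$ embeds isometrically; $\mathcal D$ is universal if this class is nonempty. For a metric space $(M,d)$ with distances in $\mathcal D$, a Katětov function is a map $\mathfrak t:F\to\mathcal D\setminus\{0\}$, $F\subseteq M$ finite, with $|\mathfrak t(x)-\mathfrak t(y)|\le d(x,y)\le\mathfrak t(x)+\mathfrak t(y)$ for all $x,y\in F$. Its orbit is $\operatorname{orb}(\mathfrak t)=\{y\in M\setminus F: d(y,x)=\mathfrak t(x)\text{ for all }x\in F\}$ and its rank is $\min_{x\in F}\mathfrak t(x)$. *)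

theory Defs
  imports Complex_Main "HOL-Library.Countable_Set"
begin

definition metric_on :: "'a set \<Rightarrow> ('a \<Rightarrow> 'a \<Rightarrow> real) \<Rightarrow> bool" where
  "metric_on M d \<longleftrightarrow>
     (\<forall>x\<in>M. \<forall>y\<in>M. (d x y = 0 \<longleftrightarrow> x = y)) \<and>
     (\<forall>x\<in>M. \<forall>y\<in>M. d x y = d y x) \<and>
     (\<forall>x\<in>M. \<forall>y\<in>M. \<forall>z\<in>M. d x z \<le> d x y + d y z)"

definition dist_set :: "'a set \<Rightarrow> ('a \<Rightarrow> 'a \<Rightarrow> real) \<Rightarrow> real set" where
  "dist_set M d = {d x y | x y. x \<in> M \<and> y \<in> M}"

definition isometry_on :: "'a set \<Rightarrow> ('a \<Rightarrow> 'a \<Rightarrow> real) \<Rightarrow> ('b \<Rightarrow> 'b \<Rightarrow> real) \<Rightarrow> ('a \<Rightarrow> 'b) \<Rightarrow> bool" where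
  "isometry_on A d d' f \<longleftrightarrow> (\<forall>x\<in>A. \<forall>y\<in>A. d' (f x) (f y) = d x y)"

definition homogeneous :: "'a set \<Rightarrow> ('a \<Rightarrow> 'a \<Rightarrow> real) \<Rightarrow> bool" where
  "homogeneous M d \<longleftrightarrow>
     (\<forall>A B f. finite A \<and> A \<subseteq> M \<and> B \<subseteq> M \<and> bij_betw f A B \<and> isometry_on A d d f \<longrightarrow>
        (\<exists>g. bij_betw g M M \<and> isometry_on M d d g \<and> (\<forall>a\<in>A. g a = f a)))"

text \<open>Every finite metric space with distances in D embeds isometrically. Finite metric
  spaces are represented (up to isometry) on finite subsets of nat.\<close>
definition finitely_universal :: "real set \<Rightarrow> 'a set \<Rightarrow> ('a \<Rightarrow> 'a \<Rightarrow> real) \<Rightarrow> bool" where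
  "finitely_universal D M d \<longleftrightarrow>
     (\<forall>(N::nat set) e. finite N \<and> metric_on N e \<and> dist_set N e \<subseteq> D \<longrightarrow>
        (\<exists>f. f ` N \<subseteq> M \<and> inj_on f N \<and> isometry_on N e d f))"

definition in_U :: "real set \<Rightarrow> 'a set \<Rightarrow> ('a \<Rightarrow> 'a \<Rightarrow> real) \<Rightarrow> bool" where
  "in_U D M d \<longleftrightarrow> countable M \<and> metric_on M d \<and> homogeneous M d \<and>
     dist_set M d = D \<and> finitely_universal D M d"

text \<open>D is universal if U_D is nonempty (countable spaces represented on subsets of nat).\<close>
definition universal_dset :: "real set \<Rightarrow> bool" where
  "universal_dset D \<longleftrightarrow> (\<exists>(M::nat set) d. in_U D M d)"

definition katetov :: "real set \<Rightarrow> 'a set \<Rightarrow> ('a \<Rightarrow> 'a \<Rightarrow> real) \<Rightarrow> 'a set \<Rightarrow> ('a \<Rightarrow> real) \<Rightarrow> bool" where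
  "katetov D M d F t \<longleftrightarrow> finite F \<and> F \<subseteq> M \<and> (\<forall>x\<in>F. t x \<in> D - {0}) \<and>
     (\<forall>x\<in>F. \<forall>y\<in>F. \<bar>t x - t y\<bar> \<le> d x y \<and> d x y \<le> t x + t y)"

definition orb :: "'a set \<Rightarrow> ('a \<Rightarrow> 'a \<Rightarrow> real) \<Rightarrow> 'a set \<Rightarrow> ('a \<Rightarrow> real) \<Rightarrow> 'a set" where
  "orb M d F t = {y \<in> M - F. \<forall>x\<in>F. d y x = t x}"

definition rank :: "'a set \<Rightarrow> ('a \<Rightarrow> real) \<Rightarrow> real" where
  "rank F t = Min (t ` F)"

end

theory Submission
  imports Defs
begin

(* If x realises the Katetov function t (x lies in its orbit), then the distances from x
   to the points of dom t are exactly the values of t.  Assigning x a new value s, the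
   Katetov inequalities between x and a point y of dom t read |s - t y| <= t y <= s + t y,
   which hold precisely when 0 <= s <= 2 t y; the inequalities at the pair (x, x) only
   need d x x = 0.  So the extension is Katetov as soon as 0 < s <= 2 t y for every y,
   i.e. 0 < s <= 2 rank(t). *)

lemma rank_le:
  assumes "finite F" and "y \<in> F"
  shows "rank F t \<le> t y"
  using assms unfolding rank_def by simp

lemma orb_realises:
  assumes "metric_on M d" and "F \<subseteq> M" and "x \<in> orb M d F t"
  shows "x \<in> M" and "x \<notin> F" and "\<And>y. y \<in> F \<Longrightarrow> d x y = t y"
    and "\<And>y. y \<in> F \<Longrightarrow> d y x = t y"
proof -
  show xM: "x \<in> M" and "x \<notin> F" and dx: "\<And>y. y \<in> F \<Longrightarrow> d x y = t y"
    using assms(3) unfolding orb_def by auto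
  fix y assume y: "y \<in> F"
  then have "d y x = d x y"
    using assms(1,2) xM unfolding metric_on_def by blast
  then show "d y x = t y" using dx y by simp
qed

lemma katetov_pair_new_value:
  fixes s ty :: real
  assumes "0 < s" and "s \<le> 2 * ty"
  shows "\<bar>s - ty\<bar> \<le> ty" and "ty \<le> s + ty"
  using assms by auto

lemma katetov_insert_orbit_point:
  assumes met: "metric_on M d" and kat: "katetov D M d F t"
    and x: "x \<in> orb M d F t"
    and s: "s \<in> D" "0 < s" and s_le: "\<And>y. y \<in> F \<Longrightarrow> s \<le> 2 * t y"
  shows "katetov D M d (insert x F) (t(x := s))"
proof -
  have F: "finite F" "F \<subseteq> M" "\<forall>y\<in>F. t y \<in> D - {0}"
    and tri: "\<And>a b. a \<in> F \<Longrightarrow> b \<in> F \<Longrightarrow> \<bar>t a - t b\<bar> \<le> d a b \<and> d a b \<le> t a + t b"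
    using kat unfolding katetov_def by auto
  note xF = orb_realises[OF met F(2) x]
  have dxx: "d x x = 0" using met xF(1) unfolding metric_on_def by auto
  have new_old: "\<bar>s - t y\<bar> \<le> d x y \<and> d x y \<le> s + t y"
    and old_new: "\<bar>t y - s\<bar> \<le> d y x \<and> d y x \<le> t y + s" if y: "y \<in> F" for y
    using katetov_pair_new_value[OF s(2) s_le[OF y]] xF(3,4)[OF y] by auto
  show ?thesis
    unfolding katetov_def
  proof (intro conjI ballI)
    show "finite (insert x F)" using F(1) by simp
    show "insert x F \<subseteq> M" using F(2) xF(1) by simp
  next
    fix y assume "y \<in> insert x F"
    then show "(t(x := s)) y \<in> D - {0}" using F(3) s by auto
  next
    fix a b assume a: "a \<in> insert x F" and b: "b \<in> insert x F"
    have "\<bar>(t(x := s)) a - (t(x := s)) b\<bar> \<le> d a b \<and> d a b \<le> (t(x := s)) a + (t(x := s)) b"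
      using a b xF(2) dxx s(2) tri new_old old_new by auto
    then show "\<bar>(t(x := s)) a - (t(x := s)) b\<bar> \<le> d a b"
      and "d a b \<le> (t(x := s)) a + (t(x := s)) b" by simp_all
  qed
qed

theorem corollary2p2:
  fixes D :: "real set" and M :: "'a set" and d :: "'a \<Rightarrow> 'a \<Rightarrow> real"
    and F :: "'a set" and t :: "'a \<Rightarrow> real" and r s :: real and x :: 'a
  assumes "finite D" and "0 \<in> D" and "\<forall>a\<in>D. a \<ge> 0"
    and "universal_dset D"
    and "in_U D M d"
    and "katetov D M d F t" and "F \<noteq> {}"
    and "rank F t = r"
    and "s \<in> D" and "0 < s" and "s \<le> 2 * r"
    and "x \<in> orb M d F t"
  shows "katetov D M d (insert x F) (t(x := s))"
proof (rule katetov_insert_orbit_point)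
  show "metric_on M d" using assms(5) unfolding in_U_def by simp
  show "katetov D M d F t" by fact
  show "x \<in> orb M d F t" by fact
  show "s \<in> D" and "0 < s" by fact+
  have "finite F" using assms(6) unfolding katetov_def by simp
  fix y assume "y \<in> F"
  with \<open>finite F\<close> have "r \<le> t y" unfolding assms(8)[symmetric] by (rule rank_le)
  then show "s \<le> 2 * t y" using \<open>s \<le> 2 * r\<close> by simp
qed

end
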